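(* For $n\geq 4$, let $A_n$ be the split graph with stable set $S=\{s_1,\dots,s_n\}$, central clique $K=\{v_{ij}:1\le i<j\le n\}$, and $N(v_{ij})\cap S=\{s_i,s_j\}$ for all $1\le i<j\le n$. Then $A_n\in SVS$, the branch graph $B(A_n/K)$ is the complete graph on $\{s_1,\dots,s_n\}$, and $A_n\in[n,2,1]\setminus[n-1,2,1]$.
   Context: A graph is split if its vertex set partitions into a stable set $S$ and a clique $K$ (central clique). For $n\geq 4$, the $n$-sun $S_n$ is the split graph with stable set $\{s_1,\dots,s_n\}$, central clique $\{v_1,\dots,v_n\}$, $N(s_i)=\{v_i,v_{i+1}\}$ for $1\le i\le n-1$ and $N(s_n)=\{v_n,v_1\}$. A split graph $G$ with partition $(S,K)$ belongs to $SVS$ if: $G$ is VPT (a vertex-intersection graph of paths in a tree); every $v\in K$ satisfies $|N(v)\cap S|\le 2$; and whenever $S_k$ with $k=4$ or $k$ odd, $k\ge 5$, is an induced subgraph of $G$, some $v\in K$ is adjacent to two non-consecutive vertices of the stable set of that $S_k$. $[h,2,1]$ is the class of vertex-intersection graphs of paths in a tree of maximum degree at most $h$. For a clique $C$ of $G$, the branch graph $B(G/C)$ has vertex set the vertices of $V(G)\setminus C$ adjacent to some vertex of $C$, two such vertices $v,w$ being adjacent iff (1) $vw\notin E(G)$; (2) some vertex of $C$ is adjacent to both; (3) there exist $v',w'\in C$ with $v'$ adjacent to $v$ but not $w$, and $w'$ adjacent to $w$ but not $v$. *)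

theory Defs
  imports Main
begin

text \<open>Graphs are given by a vertex set V and an adjacency predicate E
 (symmetric, irreflexive on V).\<close>

definition split_partition :: "'a set \<Rightarrow> ('a \<Rightarrow> 'a \<Rightarrow> bool) \<Rightarrow> 'a set \<Rightarrow> 'a set \<Rightarrow> bool" where
  "split_partition V E S K \<longleftrightarrow> S \<inter> K = {} \<and> S \<union> K = V
     \<and> (\<forall>x\<in>S. \<forall>y\<in>S. \<not> E x y)
     \<and> (\<forall>x\<in>K. \<forall>y\<in>K. x \<noteq> y \<longrightarrow> E x y)"

definition graph_path :: "nat set \<Rightarrow> (nat \<Rightarrow> nat \<Rightarrow> bool) \<Rightarrow> nat list \<Rightarrow> bool" where
  "graph_path T F xs \<longleftrightarrow> xs \<noteq> [] \<and> distinct xs \<and> set xs \<subseteq> T \<and> successively F xs"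

definition is_tree :: "nat set \<Rightarrow> (nat \<Rightarrow> nat \<Rightarrow> bool) \<Rightarrow> bool" where
  "is_tree T F \<longleftrightarrow> finite T \<and> T \<noteq> {}
     \<and> (\<forall>x y. F x y \<longrightarrow> x \<in> T \<and> y \<in> T \<and> x \<noteq> y \<and> F y x)
     \<and> (\<forall>u\<in>T. \<forall>v\<in>T. \<exists>xs. graph_path T F xs \<and> hd xs = u \<and> last xs = v)
     \<and> \<not> (\<exists>xs. graph_path T F xs \<and> length xs \<ge> 3 \<and> F (last xs) (hd xs))"

definition max_degree_le :: "nat set \<Rightarrow> (nat \<Rightarrow> nat \<Rightarrow> bool) \<Rightarrow> nat \<Rightarrow> bool" where
  "max_degree_le T F h \<longleftrightarrow> (\<forall>x\<in>T. card {y\<in>T. F x y} \<le> h)"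

definition is_tree_path :: "nat set \<Rightarrow> (nat \<Rightarrow> nat \<Rightarrow> bool) \<Rightarrow> nat set \<Rightarrow> bool" where
  "is_tree_path T F P \<longleftrightarrow> (\<exists>xs. graph_path T F xs \<and> P = set xs)"

definition vpt_model :: "'a set \<Rightarrow> ('a \<Rightarrow> 'a \<Rightarrow> bool) \<Rightarrow> nat set \<Rightarrow> (nat \<Rightarrow> nat \<Rightarrow> bool) \<Rightarrow> ('a \<Rightarrow> nat set) \<Rightarrow> bool" where
  "vpt_model V E T F P \<longleftrightarrow> is_tree T F
     \<and> (\<forall>v\<in>V. is_tree_path T F (P v))
     \<and> (\<forall>u\<in>V. \<forall>v\<in>V. u \<noteq> v \<longrightarrow> (E u v \<longleftrightarrow> P u \<inter> P v \<noteq> {}))"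

definition VPT :: "'a set \<Rightarrow> ('a \<Rightarrow> 'a \<Rightarrow> bool) \<Rightarrow> bool" where
  "VPT V E \<longleftrightarrow> (\<exists>T F P. vpt_model V E T F P)"

definition in_h21 :: "nat \<Rightarrow> 'a set \<Rightarrow> ('a \<Rightarrow> 'a \<Rightarrow> bool) \<Rightarrow> bool" where
  "in_h21 h V E \<longleftrightarrow> (\<exists>T F P. vpt_model V E T F P \<and> max_degree_le T F h)"

definition induced_sun :: "'a set \<Rightarrow> ('a \<Rightarrow> 'a \<Rightarrow> bool) \<Rightarrow> nat \<Rightarrow> (nat \<Rightarrow> 'a) \<Rightarrow> (nat \<Rightarrow> 'a) \<Rightarrow> bool" where
  "induced_sun V E k s c \<longleftrightarrow>
     (\<forall>i<k. s i \<in> V \<and> c i \<in> V) \<and> inj_on s {..<k} \<and> inj_on c {..<k}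
     \<and> (\<forall>i<k. \<forall>j<k. s i \<noteq> c j)
     \<and> (\<forall>i<k. \<forall>j<k. \<not> E (s i) (s j))
     \<and> (\<forall>i<k. \<forall>j<k. i \<noteq> j \<longrightarrow> E (c i) (c j))
     \<and> (\<forall>i<k. \<forall>j<k. E (s i) (c j) \<longleftrightarrow> (j = i \<or> j = Suc i mod k))"

definition SVS :: "'a set \<Rightarrow> ('a \<Rightarrow> 'a \<Rightarrow> bool) \<Rightarrow> 'a set \<Rightarrow> 'a set \<Rightarrow> bool" where
  "SVS V E S K \<longleftrightarrow> split_partition V E S K \<and> VPT V E
     \<and> (\<forall>v\<in>K. card {x\<in>S. E v x} \<le> 2)
     \<and> (\<forall>k s c. (k = 4 \<or> (odd k \<and> k \<ge> 5)) \<and> induced_sun V E k s c \<longrightarrow>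
          (\<exists>v\<in>K. \<exists>i<k. \<exists>j<k. i \<noteq> j \<and> j \<noteq> Suc i mod k \<and> i \<noteq> Suc j mod k
                   \<and> E v (s i) \<and> E v (s j)))"

definition branch_vertices :: "'a set \<Rightarrow> ('a \<Rightarrow> 'a \<Rightarrow> bool) \<Rightarrow> 'a set \<Rightarrow> 'a set" where
  "branch_vertices V E C = {x \<in> V - C. \<exists>c\<in>C. E x c}"

definition branch_adj :: "('a \<Rightarrow> 'a \<Rightarrow> bool) \<Rightarrow> 'a set \<Rightarrow> 'a \<Rightarrow> 'a \<Rightarrow> bool" where
  "branch_adj E C v w \<longleftrightarrow> \<not> E v w \<and> (\<exists>c\<in>C. E c v \<and> E c w)
     \<and> (\<exists>v'\<in>C. E v' v \<and> \<not> E v' w) \<and> (\<exists>w'\<in>C. E w' w \<and> \<not> E w' v)"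

datatype avert = Sv nat | Cv nat nat

definition An_S :: "nat \<Rightarrow> avert set" where
  "An_S n = {Sv i | i. 1 \<le> i \<and> i \<le> n}"

definition An_K :: "nat \<Rightarrow> avert set" where
  "An_K n = {Cv i j | i j. 1 \<le> i \<and> i < j \<and> j \<le> n}"

definition An_V :: "nat \<Rightarrow> avert set" where
  "An_V n = An_S n \<union> An_K n"

fun An_E :: "avert \<Rightarrow> avert \<Rightarrow> bool" where
  "An_E (Sv i) (Sv j) = False"
| "An_E (Sv i) (Cv j k) = (i = j \<or> i = k)"
| "An_E (Cv j k) (Sv i) = (i = j \<or> i = k)"
| "An_E (Cv i j) (Cv k l) = ((i, j) \<noteq> (k, l))"

end

theory Submission
  imports Defs
begin

(* Easy part: A_n is the vertex-intersection graph of the paths of the star K_{1,n}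
   (s_i is the leaf i, v_ij is the path i - centre - j), so it is VPT and in [n,2,1];
   the remaining SVS conditions, the branch vertices and the completeness of the branch
   graph B(A_n/K) are checked directly from the definition of A_n.

   Hard part: A_n is not in [n-1,2,1].  In a path model of A_n the clique paths pairwise meet, hence share a node x;
   x lies on no stable path, and a three-path argument shows that the stable paths lie in
   pairwise different components of T - x.  Each component contains a neighbour of x, so
   x has degree at least n. *)

section \<open>Trees: reachability, separation and the Helly property\<close>

lemma successively_take: "successively P xs \<Longrightarrow> successively P (take k xs)"
  by (metis append_take_drop_id successively_append_iff)

lemma successively_drop: "successively P xs \<Longrightarrow> successively P (drop k xs)"
  by (metis append_take_drop_id successively_append_iff)

locale tree_graph =
  fixes T :: "nat set" and F :: "nat \<Rightarrow> nat \<Rightarrow> bool"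
  assumes tree: "is_tree T F"
begin

lemma edge_in_tree: "F u v \<Longrightarrow> u \<in> T \<and> v \<in> T \<and> u \<noteq> v \<and> F v u"
  using tree unfolding is_tree_def by blast

lemma tree_connected: "u \<in> T \<Longrightarrow> v \<in> T \<Longrightarrow> \<exists>xs. graph_path T F xs \<and> hd xs = u \<and> last xs = v"
  using tree unfolding is_tree_def by blast

lemma tree_acyclic: "graph_path T F xs \<Longrightarrow> length xs \<ge> 3 \<Longrightarrow> F (last xs) (hd xs) \<Longrightarrow> False"
  using tree unfolding is_tree_def by blast

definition joined :: "nat set \<Rightarrow> nat \<Rightarrow> nat \<Rightarrow> bool" where
  "joined Q = (\<lambda>u v. F u v \<and> u \<in> Q \<and> v \<in> Q)\<^sup>*\<^sup>*"

lemma joined_refl: "joined Q a a"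
  by (simp add: joined_def)

lemma joined_trans: "joined Q a b \<Longrightarrow> joined Q b c \<Longrightarrow> joined Q a c"
  unfolding joined_def by (rule rtranclp_trans)

lemma joined_step: "F a b \<Longrightarrow> a \<in> Q \<Longrightarrow> b \<in> Q \<Longrightarrow> joined Q a b"
  unfolding joined_def by (rule r_into_rtranclp) simp

lemma joined_sym: "joined Q a b \<Longrightarrow> joined Q b a"
  unfolding joined_def
proof (induction rule: rtranclp_induct)
  case (step y z)
  then have "F z y \<and> z \<in> Q \<and> y \<in> Q" using edge_in_tree by blast
  then show ?case by (rule converse_rtranclp_into_rtranclp) (rule step(3))
qed simp

lemma joined_on_walk:
  "successively F L \<Longrightarrow> set L \<subseteq> Q \<Longrightarrow> a \<in> set L \<Longrightarrow> b \<in> set L \<Longrightarrow> joined Q a b"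
proof (induction L arbitrary: a b)
  case (Cons x L)
  show ?case
  proof (cases "L = []")
    case True then show ?thesis using Cons by (simp add: joined_refl)
  next
    case False
    have edge: "F x (hd L)" and walk: "successively F L"
      using Cons(2) False by (auto simp: successively_Cons)
    have IH: "\<And>a b. a \<in> set L \<Longrightarrow> b \<in> set L \<Longrightarrow> joined Q a b" using Cons walk by auto
    have "joined Q x (hd L)" using joined_step[OF edge] Cons(3) hd_in_set[OF False] by auto
    then have from_x: "joined Q x b" if "b \<in> set (x # L)" for b
      using that IH[of "hd L" b] False joined_refl joined_trans by fastforce
    show ?thesis using Cons(4,5) from_x IH joined_sym by (metis set_ConsD)
  qed
qed simp

lemma joined_on_path: "graph_path T F L \<Longrightarrow> set L \<subseteq> Q \<Longrightarrow> a \<in> set L \<Longrightarrow> b \<in> set L \<Longrightarrow> joined Q a b"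
  unfolding graph_path_def using joined_on_walk by blast

lemma path_of_joined:
  assumes "joined Q a b" "a \<in> Q" "Q \<subseteq> T"
  shows "\<exists>p. graph_path T F p \<and> hd p = a \<and> last p = b \<and> set p \<subseteq> Q"
  using assms(1) unfolding joined_def
proof (induction rule: rtranclp_induct)
  case base
  then show ?case using assms by (intro exI[of _ "[a]"]) (auto simp: graph_path_def)
next
  case (step y z)
  then obtain p where p: "graph_path T F p" "hd p = a" "last p = y" "set p \<subseteq> Q" by blast
  show ?case
  proof (cases "z \<in> set p")
    case True
    then obtain p1 p2 where "p = p1 @ z # p2" by (meson split_list)
    then have split: "p = (p1 @ [z]) @ p2" by simp
    then have "graph_path T F (p1 @ [z])" using p(1) unfolding graph_path_def
      by (metis Nil_is_append_conv distinct_append set_append le_sup_iff not_Cons_self2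
          successively_append_iff)
    moreover have "hd (p1 @ [z]) = a" using p(2) split by (cases p1) auto
    ultimately show ?thesis using p split by (intro exI[of _ "p1 @ [z]"]) auto
  next
    case False
    have "graph_path T F (p @ [z])" using p(1) False step(2) assms(3) unfolding graph_path_def
      by (auto simp: successively_append_iff p(3))
    moreover have "hd (p @ [z]) = a" using p(1,2) by (auto simp: graph_path_def)
    ultimately show ?thesis using p step(2) by (intro exI[of _ "p @ [z]"]) auto
  qed
qed

text \<open>An inner vertex z of a path separates its two ends: otherwise a detour avoiding z
  closes a cycle through z.\<close>
lemma path_separates:
  assumes path: "graph_path T F xs" and z: "z \<in> set xs" "z \<noteq> hd xs" "z \<noteq> last xs"
  shows "\<not> joined (T - {z}) (hd xs) (last xs)"
proof
  assume ends_joined: "joined (T - {z}) (hd xs) (last xs)"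
  obtain pre suf where xs: "xs = pre @ z # suf" using z(1) by (meson split_list)
  have ne: "pre \<noteq> []" "suf \<noteq> []" using z(2,3) xs by auto
  have d: "distinct xs" "set xs \<subseteq> T" "successively F xs" using path by (auto simp: graph_path_def)
  have sub: "set pre \<subseteq> T - {z}" "set suf \<subseteq> T - {z}" using d(1,2) xs by auto
  have walks: "successively F pre" "successively F suf" and
    edges: "F (last pre) z" "F z (hd suf)"
    using d(3) ne unfolding xs by (auto simp: successively_append_iff successively_Cons)
  have "joined (T - {z}) (last pre) (hd xs)"
    using joined_on_walk[OF walks(1) sub(1)] ne xs by (simp add: hd_append)
  moreover have "joined (T - {z}) (last xs) (hd suf)"
    using joined_on_walk[OF walks(2) sub(2)] ne xs by simp
  ultimately have "joined (T - {z}) (last pre) (hd suf)" using ends_joined joined_trans by blast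
  moreover have "last pre \<in> T - {z}" using sub(1) last_in_set[OF ne(1)] by blast
  ultimately obtain p where p: "graph_path T F p" "hd p = last pre" "last p = hd suf"
    "set p \<subseteq> T - {z}" using path_of_joined[OF _ _ Diff_subset] by blast
  have "last pre \<noteq> hd suf"
    using d(1) last_in_set[OF ne(1)] hd_in_set[OF ne(2)] unfolding xs by auto
  then have long: "length (z # p) \<ge> 3" using p(1,2,3)
    by (cases p) (auto simp: graph_path_def Suc_le_eq split: if_splits)
  have "graph_path T F (z # p)"
    using p edge_in_tree[OF edges(1)] d(2) xs unfolding graph_path_def
    by (auto simp: successively_Cons)
  moreover have "F (last (z # p)) (hd (z # p))" using p(1,3) edge_in_tree[OF edges(2)]
    by (auto simp: graph_path_def)
  ultimately show False using tree_acyclic long by blast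
qed

lemma path_separates_nth:
  assumes path: "graph_path T F L" and ijk: "i < j" "j < k" "k < length L"
  shows "\<not> joined (T - {L ! j}) (L ! i) (L ! k)"
proof -
  define g where "g = drop i (take (Suc k) L)"
  have len: "length g = Suc k - i" using ijk by (simp add: g_def)
  have "graph_path T F g" using path ijk unfolding g_def graph_path_def
    by (auto simp: successively_take successively_drop dest: in_set_dropD in_set_takeD)
  moreover have "hd g = L ! i" "last g = L ! k" using ijk len unfolding g_def
    by (simp_all add: hd_drop_conv_nth last_conv_nth)
  moreover have "L ! j = g ! (j - i)" using ijk unfolding g_def by simp
  then have "L ! j \<in> set g" using len ijk by simp
  moreover have "L ! j \<noteq> L ! i" "L ! j \<noteq> L ! k"
    using path ijk by (auto simp: graph_path_def nth_eq_iff_index_eq)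
  ultimately show ?thesis using path_separates by metis
qed

lemma path_three_between:
  assumes path: "graph_path T F L" and abc: "a \<in> set L" "b \<in> set L" "c \<in> set L"
    and d: "a \<noteq> b" "b \<noteq> c" "a \<noteq> c"
  shows "\<not> joined (T - {b}) a c \<or> \<not> joined (T - {a}) b c \<or> \<not> joined (T - {c}) a b"
proof -
  obtain ia ib ic where idx: "ia < length L" "L ! ia = a" "ib < length L" "L ! ib = b"
    "ic < length L" "L ! ic = c" using abc by (meson in_set_conv_nth)
  have sep: "\<not> joined (T - {L ! j}) (L ! i) (L ! k) \<and> \<not> joined (T - {L ! j}) (L ! k) (L ! i)"
    if "i < j" "j < k" "k < length L" for i j k
    using path_separates_nth[OF path that] joined_sym by blast
  have "ia \<noteq> ib" "ib \<noteq> ic" "ia \<noteq> ic" using idx d by auto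
  then consider "ia < ib \<and> ib < ic" | "ic < ib \<and> ib < ia" | "ib < ia \<and> ia < ic"
    | "ic < ia \<and> ia < ib" | "ia < ic \<and> ic < ib" | "ib < ic \<and> ic < ia" by linarith
  then show ?thesis
    using sep[of ia ib ic] sep[of ic ib ia] sep[of ib ia ic] sep[of ic ia ib]
      sep[of ia ic ib] sep[of ib ic ia] idx by cases auto
qed

text \<open>Convex vertex sets (vertex sets of subtrees): closed under the paths between
  their members.\<close>
definition convex :: "nat set \<Rightarrow> bool" where
  "convex Q \<longleftrightarrow> Q \<subseteq> T \<and> (\<forall>g. graph_path T F g \<and> hd g \<in> Q \<and> last g \<in> Q \<longrightarrow> set g \<subseteq> Q)"

lemma convex_path: assumes L: "graph_path T F L" shows "convex (set L)"
  unfolding convex_def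
proof (intro conjI allI impI subsetI)
  show "z \<in> T" if "z \<in> set L" for z using L that by (auto simp: graph_path_def)
next
  fix g z assume g: "graph_path T F g \<and> hd g \<in> set L \<and> last g \<in> set L" and z: "z \<in> set g"
  show "z \<in> set L"
  proof (rule ccontr)
    assume n: "z \<notin> set L"
    have "set L \<subseteq> T - {z}" using n L by (auto simp: graph_path_def)
    then have "joined (T - {z}) (hd g) (last g)" using joined_on_path L g by simp
    moreover have "z \<noteq> hd g" "z \<noteq> last g" using g n by auto
    ultimately show False using path_separates g z by blast
  qed
qed

lemma convex_T: "convex T"
  unfolding convex_def by (auto simp: graph_path_def)

lemma convex_Int: "convex A \<Longrightarrow> convex B \<Longrightarrow> convex (A \<inter> B)"
  unfolding convex_def by blast

lemma convex_joined: assumes "convex Q" "u \<in> Q" "v \<in> Q" "Q \<subseteq> Q'" shows "joined Q' u v"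
proof -
  obtain g where g: "graph_path T F g" "hd g = u" "last g = v"
    using tree_connected assms unfolding convex_def by blast
  then have "set g \<subseteq> Q" using assms unfolding convex_def by blast
  then show ?thesis using joined_on_path g assms(4)
    by (metis graph_path_def hd_in_set last_in_set subset_trans)
qed

lemma walk_meets_intersection:
  assumes "successively F g" "g \<noteq> []" "hd g \<in> B" "last g \<in> C" "set g \<subseteq> B \<union> C"
    and no_edge: "\<And>u w. u \<in> B - C \<Longrightarrow> w \<in> C - B \<Longrightarrow> F u w \<Longrightarrow> False"
  shows "\<exists>z \<in> set g. z \<in> B \<inter> C"
  using assms(1-5)
proof (induction g)
  case (Cons x g)
  show ?case
  proof (cases "x \<in> C")
    case False
    then have ne: "g \<noteq> []" using Cons by auto
    have e: "F x (hd g)" "successively F g" using Cons(2) ne by (auto simp: successively_Cons)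
    have "hd g \<in> B"
      using no_edge[of x "hd g"] e False Cons(4,6) ne by (auto dest!: subsetD[of _ _ "hd g"])
    then show ?thesis using Cons.IH[OF e(2) ne] Cons ne by auto
  qed (use Cons in auto)
qed simp

lemma helly3:
  assumes cv: "convex A" "convex B" "convex C"
    and a: "a \<in> A" "a \<in> B" and b: "b \<in> B" "b \<in> C" and c: "c \<in> A" "c \<in> C"
  shows "\<exists>x. x \<in> A \<and> x \<in> B \<and> x \<in> C"
proof -
  have ABC: "A \<subseteq> T" "B \<subseteq> T" "C \<subseteq> T" using cv by (auto simp: convex_def)
  have no_edge: False if u: "u \<in> B - C" and w: "w \<in> C - B" and e: "F u w" for u w
  proof -
    text \<open>The path from b to u in B, extended by w, has u as an inner vertex, but b and w
      are joined inside C, which avoids u.\<close>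
    obtain p where p: "graph_path T F p" "hd p = b" "last p = u"
      using tree_connected b u ABC by blast
    have ne: "p \<noteq> []" using p(1) by (simp add: graph_path_def)
    have "set p \<subseteq> B" using cv(2) p b u unfolding convex_def by blast
    then have "w \<notin> set p" using w by auto
    then have ext: "graph_path T F (p @ [w])" using p e edge_in_tree[OF e] ne
      unfolding graph_path_def by (simp add: successively_append_iff)
    have "u \<in> set (p @ [w])" using p(3) last_in_set[OF ne] by simp
    moreover have "u \<noteq> hd (p @ [w])" "hd (p @ [w]) = b" using p(2) ne u b by auto
    moreover have "u \<noteq> last (p @ [w])" using edge_in_tree[OF e] by simp
    ultimately have "\<not> joined (T - {u}) b w" using path_separates[OF ext] by simp
    moreover have "C \<subseteq> T - {u}" using u ABC by auto
    then have "joined (T - {u}) b w" using convex_joined[OF cv(3) b(2), of w] w by blast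
    ultimately show False by simp
  qed
  obtain g where g: "graph_path T F g" "hd g = a" "last g = c"
    using tree_connected a c ABC by blast
  have gA: "set g \<subseteq> A" using cv(1) g a c unfolding convex_def by blast
  have gBC: "set g \<subseteq> B \<union> C"
  proof
    fix z assume z: "z \<in> set g"
    show "z \<in> B \<union> C"
    proof (rule ccontr)
      assume n: "z \<notin> B \<union> C"
      then have "B \<subseteq> T - {z}" "C \<subseteq> T - {z}" using ABC by auto
      then have "joined (T - {z}) a b" "joined (T - {z}) b c"
        using convex_joined[OF cv(2) a(2) b(1)] convex_joined[OF cv(3) b(2) c(2)] by auto
      then have "joined (T - {z}) a c" using joined_trans by blast
      moreover have "z \<noteq> a" "z \<noteq> c" using n a c by auto
      ultimately show False using path_separates[OF g(1) z] g by simp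
    qed
  qed
  obtain z where "z \<in> set g" "z \<in> B \<inter> C"
    using walk_meets_intersection[of g B C] g a c gBC no_edge by (auto simp: graph_path_def)
  then show ?thesis using gA by blast
qed

lemma helly_within:
  assumes "finite \<A>"
  shows "convex D \<Longrightarrow> (\<And>A. A \<in> \<A> \<Longrightarrow> convex A) \<Longrightarrow>
     (\<And>A B. A \<in> \<A> \<Longrightarrow> B \<in> \<A> \<Longrightarrow> A \<inter> B \<inter> D \<noteq> {}) \<Longrightarrow> D \<noteq> {}
      \<Longrightarrow> (\<exists>x\<in>D. \<forall>A\<in>\<A>. x \<in> A)"
  using assms
proof (induction \<A> arbitrary: D rule: finite_induct)
  case (insert A \<A>)
  have cvx: "convex A" "\<And>C. C \<in> \<A> \<Longrightarrow> convex C" using insert.prems(2) by blast+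
  have meet: "\<And>A' B. A' \<in> insert A \<A> \<Longrightarrow> B \<in> insert A \<A> \<Longrightarrow> A' \<inter> B \<inter> D \<noteq> {}"
    using insert.prems(3) by blast
  have cD: "convex (D \<inter> A)" using cvx insert.prems(1) convex_Int by blast
  have pairwise: "C \<inter> E \<inter> (D \<inter> A) \<noteq> {}" if CE: "C \<in> \<A>" "E \<in> \<A>" for C E
  proof -
    obtain a where a: "a \<in> D \<inter> A" "a \<in> C" using meet[of A C] CE by blast
    obtain b where b: "b \<in> C" "b \<in> E" using meet[of C E] CE by blast
    obtain c where c: "c \<in> D \<inter> A" "c \<in> E" using meet[of A E] CE by blast
    show ?thesis using helly3[OF cD cvx(2)[OF CE(1)] cvx(2)[OF CE(2)] a b c] by blast
  qed
  have "D \<inter> A \<noteq> {}" using meet[of A A] by blast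
  then obtain x where "x \<in> D \<inter> A" "\<forall>C\<in>\<A>. x \<in> C"
    using insert.IH[OF cD cvx(2) pairwise] by blast
  then show ?case by blast
qed blast

lemma helly:
  assumes "finite \<A>" "\<forall>A\<in>\<A>. convex A" "\<forall>A\<in>\<A>. \<forall>B\<in>\<A>. A \<inter> B \<noteq> {}"
  shows "\<exists>x\<in>T. \<forall>A\<in>\<A>. x \<in> A"
proof -
  have "A \<inter> B \<inter> T \<noteq> {}" if "A \<in> \<A>" "B \<in> \<A>" for A B
  proof -
    have "A \<subseteq> T" using assms(2) that(1) by (simp add: convex_def)
    then show ?thesis using assms(3) that by blast
  qed
  moreover have "T \<noteq> {}" using tree by (simp add: is_tree_def)
  ultimately show ?thesis using helly_within[OF assms(1) convex_T] assms(2) by blast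
qed

text \<open>Five paths arranged like the paths of s_i, s_j, v_ij, v_ik, v_jk in a model of A_n:
  if the last three pass through x and the first two avoid x, then the paths of s_i
  and s_j lie in different components of T - x.\<close>
lemma three_paths_separate:
  assumes gp: "graph_path T F Lij" "graph_path T F Lik" "graph_path T F Ljk"
      "graph_path T F Li" "graph_path T F Lj"
    and x: "x \<in> set Lij" "x \<in> set Lik" "x \<in> set Ljk" "x \<notin> set Li" "x \<notin> set Lj"
    and disj: "set Li \<inter> set Lj = {}"
    and meet: "set Li \<inter> set Lij \<noteq> {}" "set Lj \<inter> set Lij \<noteq> {}"
      "set Li \<inter> set Lik \<noteq> {}" "set Lj \<inter> set Ljk \<noteq> {}"
    and miss: "set Lj \<inter> set Lik = {}" "set Li \<inter> set Ljk = {}"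
    and ab: "a \<in> set Li" "b \<in> set Lj"
  shows "\<not> joined (T - {x}) a b"
proof
  assume ab_joined: "joined (T - {x}) a b"
  obtain p q where p: "p \<in> set Li" "p \<in> set Lij" and q: "q \<in> set Lj" "q \<in> set Lij"
    using meet(1,2) by blast
  have sT: "set Li \<subseteq> T" "set Lj \<subseteq> T" "set Lik \<subseteq> T" "set Ljk \<subseteq> T"
    using gp by (auto simp: graph_path_def)
  have "set Li \<subseteq> T - {x}" "set Lj \<subseteq> T - {x}" using sT x by auto
  then have "joined (T - {x}) p a" "joined (T - {x}) b q"
    using joined_on_path[OF gp(4)] joined_on_path[OF gp(5)] p q ab by auto
  then have pq: "joined (T - {x}) p q" using ab_joined joined_trans by blast
  have "x \<noteq> p" "p \<noteq> q" "x \<noteq> q" using x p q disj by auto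
  then consider "\<not> joined (T - {p}) x q" | "\<not> joined (T - {x}) p q" | "\<not> joined (T - {q}) x p"
    using path_three_between[OF gp(1) x(1) p(2) q(2)] by blast
  then show False
  proof cases
    case 1
    text \<open>x and q are joined through the paths of v_jk and s_j, which avoid p.\<close>
    obtain q' where q': "q' \<in> set Lj" "q' \<in> set Ljk" using meet(4) by blast
    have "set Ljk \<subseteq> T - {p}" "set Lj \<subseteq> T - {p}" using p miss disj sT by auto
    then have "joined (T - {p}) x q'" "joined (T - {p}) q' q"
      using joined_on_path[OF gp(3)] joined_on_path[OF gp(5)] x q' q by auto
    then show False using 1 joined_trans by blast
  next
    case 2 then show False using pq by simp
  next
    case 3
    obtain p' where p': "p' \<in> set Li" "p' \<in> set Lik" using meet(3) by blast
    have "set Lik \<subseteq> T - {q}" "set Li \<subseteq> T - {q}" using q miss disj sT by auto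
    then have "joined (T - {q}) x p'" "joined (T - {q}) p' p"
      using joined_on_path[OF gp(2)] joined_on_path[OF gp(4)] x p' p by auto
    then show False using 3 joined_trans by blast
  qed
qed

lemma neighbour_towards:
  assumes x: "x \<in> T" and a: "a \<in> T" "a \<noteq> x"
  shows "\<exists>y. F x y \<and> joined (T - {x}) y a"
proof -
  obtain g where g: "graph_path T F g" "hd g = x" "last g = a" using tree_connected x a by blast
  then obtain g' where g': "g = x # g'" by (cases g) (auto simp: graph_path_def)
  then have ne: "g' \<noteq> []" using g(3) a(2) by auto
  have "F x (hd g')" "successively F g'" "set g' \<subseteq> T - {x}"
    using g(1) g' ne by (auto simp: graph_path_def successively_Cons)
  moreover have "last g' = a" using ne g(3) g' by simp
  ultimately show ?thesis using joined_on_walk ne by (metis hd_in_set last_in_set)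
qed

lemma degree_ge_separated:
  assumes x: "x \<in> T" and a: "\<And>i. i \<in> I \<Longrightarrow> a i \<in> T - {x}"
    and separated: "\<And>i j. i \<in> I \<Longrightarrow> j \<in> I \<Longrightarrow> i \<noteq> j \<Longrightarrow> \<not> joined (T - {x}) (a i) (a j)"
  shows "card I \<le> card {y\<in>T. F x y}"
proof -
  define nb where "nb i = (SOME y. F x y \<and> joined (T - {x}) y (a i))" for i
  have nb: "F x (nb i) \<and> joined (T - {x}) (nb i) (a i)" if "i \<in> I" for i
    unfolding nb_def by (rule someI_ex) (use neighbour_towards[OF x] a[OF that] in blast)
  have "inj_on nb I"
  proof (rule inj_onI, rule ccontr)
    fix i j assume ij: "i \<in> I" "j \<in> I" "nb i = nb j" "i \<noteq> j"
    then have "joined (T - {x}) (a i) (a j)" using nb joined_sym joined_trans by metis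
    then show False using separated ij by blast
  qed
  moreover have "nb ` I \<subseteq> {y\<in>T. F x y}" using nb edge_in_tree by blast
  moreover have "finite {y\<in>T. F x y}" using tree by (simp add: is_tree_def)
  ultimately show ?thesis by (metis card_image card_mono)
qed

end

section \<open>The graph A_n\<close>

definition pair_vertex :: "nat \<Rightarrow> nat \<Rightarrow> avert" where
  "pair_vertex i j = Cv (min i j) (max i j)"

lemma pair_vertex_in_K:
  "i \<noteq> j \<Longrightarrow> 1 \<le> i \<Longrightarrow> i \<le> n \<Longrightarrow> 1 \<le> j \<Longrightarrow> j \<le> n \<Longrightarrow> pair_vertex i j \<in> An_K n"
  unfolding pair_vertex_def An_K_def by (cases "i < j") (auto simp: min_def max_def)

lemma pair_vertex_adj [simp]:
  "An_E (Sv t) (pair_vertex i j) \<longleftrightarrow> t = i \<or> t = j"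
  "An_E (pair_vertex i j) (Sv t) \<longleftrightarrow> t = i \<or> t = j"
  unfolding pair_vertex_def by (auto simp: min_def max_def)

lemma Sv_ne_pair_vertex [simp]: "Sv t \<noteq> pair_vertex i j"
  by (simp add: pair_vertex_def)

lemma Sv_in_V: "Sv t \<in> An_V n \<longleftrightarrow> 1 \<le> t \<and> t \<le> n"
  unfolding An_V_def An_S_def An_K_def by auto

lemma K_sub_V: "An_K n \<subseteq> An_V n"
  unfolding An_V_def by auto

lemma finite_K: "finite (An_K n)"
proof -
  have "An_K n \<subseteq> (\<lambda>(i, j). Cv i j) ` ({..n} \<times> {..n})" unfolding An_K_def by auto
  then show ?thesis by (rule finite_subset) auto
qed

lemma exists_other_index: "3 \<le> (n::nat) \<Longrightarrow> \<exists>k. 1 \<le> k \<and> k \<le> n \<and> k \<noteq> i \<and> k \<noteq> j"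
  by presburger

subsection \<open>Every path model of A_n has a node of degree at least n\<close>

locale An_path_model =
  fixes n :: nat and T :: "nat set" and F :: "nat \<Rightarrow> nat \<Rightarrow> bool" and P :: "avert \<Rightarrow> nat set"
  assumes model: "vpt_model (An_V n) An_E T F P" and n3: "3 \<le> n"
begin

sublocale tree_graph T F
  using model by unfold_locales (simp add: vpt_model_def)

lemma path_of_vertex: "v \<in> An_V n \<Longrightarrow> \<exists>L. graph_path T F L \<and> P v = set L"
  using model unfolding vpt_model_def is_tree_path_def by blast

lemma adj_iff_meet: "u \<in> An_V n \<Longrightarrow> v \<in> An_V n \<Longrightarrow> u \<noteq> v \<Longrightarrow> An_E u v \<longleftrightarrow> P u \<inter> P v \<noteq> {}"
  using model unfolding vpt_model_def by blast

lemma stable_meets_pair: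
  assumes "1 \<le> t" "t \<le> n" "pair_vertex i j \<in> An_K n"
  shows "P (Sv t) \<inter> P (pair_vertex i j) \<noteq> {} \<longleftrightarrow> t = i \<or> t = j"
  using adj_iff_meet[of "Sv t" "pair_vertex i j"] assms K_sub_V Sv_in_V by auto

text \<open>By the Helly property the pairwise meeting clique paths share a node.\<close>
lemma clique_paths_common_node: "\<exists>x\<in>T. \<forall>v\<in>An_K n. x \<in> P v"
proof -
  have cvx: "\<forall>A\<in>P ` An_K n. convex A"
  proof
    fix A assume "A \<in> P ` An_K n"
    then obtain v where v: "v \<in> An_K n" "A = P v" by blast
    then have "v \<in> An_V n" using K_sub_V by blast
    then obtain L where "graph_path T F L" "P v = set L" using path_of_vertex by blast
    then show "convex A" using convex_path v by simp
  qed
  have "P u \<inter> P v \<noteq> {}" if "u \<in> An_K n" "v \<in> An_K n" for u v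
  proof (cases "u = v")
    case True
    have "v \<in> An_V n" using that K_sub_V by blast
    then show ?thesis using path_of_vertex[of v] True by (auto simp: graph_path_def)
  next
    case False
    then have "An_E u v" using that unfolding An_K_def by auto
    then show ?thesis using adj_iff_meet[of u v] that False K_sub_V by auto
  qed
  then have "\<forall>A\<in>P ` An_K n. \<forall>B\<in>P ` An_K n. A \<inter> B \<noteq> {}" by auto
  then obtain x where "x \<in> T" "\<forall>A\<in>P ` An_K n. x \<in> A"
    using helly[OF finite_imageI[OF finite_K] cvx] by blast
  then show ?thesis by blast
qed

text \<open>A node on all clique paths lies on no stable path, as s_t misses v_ab for a, b \<noteq> t.\<close>
lemma common_node_not_stable:
  assumes x: "\<forall>v\<in>An_K n. x \<in> P v" and t: "1 \<le> t" "t \<le> n"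
  shows "x \<notin> P (Sv t)"
proof -
  obtain a where a: "1 \<le> a" "a \<le> n" "a \<noteq> t" using exists_other_index[OF n3] by blast
  obtain b where b: "1 \<le> b" "b \<le> n" "b \<noteq> t" "b \<noteq> a" using exists_other_index[OF n3] by blast
  have K: "pair_vertex a b \<in> An_K n" using pair_vertex_in_K a b by simp
  then have "P (Sv t) \<inter> P (pair_vertex a b) = {}" using stable_meets_pair[OF t K] a b by simp
  moreover have "x \<in> P (pair_vertex a b)" using x K by blast
  ultimately show ?thesis by blast
qed

lemma path_of_stable: "1 \<le> t \<Longrightarrow> t \<le> n \<Longrightarrow> \<exists>L. graph_path T F L \<and> P (Sv t) = set L"
  using path_of_vertex Sv_in_V by simp

lemma path_of_clique: "v \<in> An_K n \<Longrightarrow> \<exists>L. graph_path T F L \<and> P v = set L"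
  using path_of_vertex K_sub_V by blast

lemma stable_paths_separated:
  assumes x: "\<forall>v\<in>An_K n. x \<in> P v"
    and ij: "1 \<le> i" "i \<le> n" "1 \<le> j" "j \<le> n" "i \<noteq> j"
    and ab: "a \<in> P (Sv i)" "b \<in> P (Sv j)"
  shows "\<not> joined (T - {x}) a b"
proof -
  obtain k where k: "1 \<le> k" "k \<le> n" "k \<noteq> i" "k \<noteq> j" using exists_other_index[OF n3] by blast
  have K: "pair_vertex i j \<in> An_K n" "pair_vertex i k \<in> An_K n" "pair_vertex j k \<in> An_K n"
    using pair_vertex_in_K ij k by auto
  obtain Li Lj where Li: "graph_path T F Li" "P (Sv i) = set Li"
    and Lj: "graph_path T F Lj" "P (Sv j) = set Lj"
    using path_of_stable ij by metis
  obtain Lij Lik Ljk where Lij: "graph_path T F Lij" "P (pair_vertex i j) = set Lij"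
    and Lik: "graph_path T F Lik" "P (pair_vertex i k) = set Lik"
    and Ljk: "graph_path T F Ljk" "P (pair_vertex j k) = set Ljk"
    using path_of_clique K by metis
  have "set Li \<inter> set Lj = {}"
    using adj_iff_meet[of "Sv i" "Sv j"] Sv_in_V ij Li Lj by auto
  moreover have "x \<in> set Lij" "x \<in> set Lik" "x \<in> set Ljk"
    using x K Lij Lik Ljk by auto
  moreover have "x \<notin> set Li" "x \<notin> set Lj" using common_node_not_stable[OF x] ij Li Lj by auto
  moreover have "set Li \<inter> set Lij \<noteq> {}" "set Lj \<inter> set Lij \<noteq> {}"
    "set Li \<inter> set Lik \<noteq> {}" "set Lj \<inter> set Ljk \<noteq> {}"
    "set Lj \<inter> set Lik = {}" "set Li \<inter> set Ljk = {}"
    using stable_meets_pair[OF ij(1,2) K(1)] stable_meets_pair[OF ij(3,4) K(1)]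
      stable_meets_pair[OF ij(1,2) K(2)] stable_meets_pair[OF ij(3,4) K(3)]
      stable_meets_pair[OF ij(3,4) K(2)] stable_meets_pair[OF ij(1,2) K(3)]
      k ij Li(2) Lj(2) Lij(2) Lik(2) Ljk(2) by simp_all
  ultimately show ?thesis
    using three_paths_separate[OF Lij(1) Lik(1) Ljk(1) Li(1) Lj(1)] ab Li Lj by simp
qed

lemma node_of_degree_n: "\<exists>x\<in>T. n \<le> card {y\<in>T. F x y}"
proof -
  obtain x where x: "x \<in> T" "\<forall>v\<in>An_K n. x \<in> P v" using clique_paths_common_node by blast
  have "\<exists>a. a \<in> P (Sv t) \<and> a \<in> T - {x}" if "t \<in> {1..n}" for t
  proof -
    have "1 \<le> t" "t \<le> n" using that by auto
    then obtain L where L: "graph_path T F L" "P (Sv t) = set L" using path_of_stable by blast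
    then have "hd L \<in> P (Sv t)" "hd L \<in> T" by (auto simp: graph_path_def)
    moreover have "x \<notin> P (Sv t)" using common_node_not_stable[OF x(2)] that by auto
    ultimately show ?thesis by blast
  qed
  then obtain a where a: "\<And>t. t \<in> {1..n} \<Longrightarrow> a t \<in> P (Sv t) \<and> a t \<in> T - {x}" by metis
  have "card {1..n} \<le> card {y\<in>T. F x y}"
  proof (rule degree_ge_separated[OF x(1)])
    show "a t \<in> T - {x}" if "t \<in> {1..n}" for t using a[OF that] by blast
    show "\<not> joined (T - {x}) (a i) (a j)" if "i \<in> {1..n}" "j \<in> {1..n}" "i \<noteq> j" for i j
      using stable_paths_separated[OF x(2)] a[OF that(1)] a[OF that(2)] that by auto
  qed
  then show ?thesis using x(1) by auto
qed

end

lemma An_not_in_h21: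
  assumes "3 \<le> n" shows "\<not> in_h21 (n - 1) (An_V n) An_E"
proof
  assume "in_h21 (n - 1) (An_V n) An_E"
  then obtain T F P where M: "vpt_model (An_V n) An_E T F P" and D: "max_degree_le T F (n - 1)"
    unfolding in_h21_def by blast
  interpret An_path_model n T F P using M assms by unfold_locales
  obtain x where "x \<in> T" "n \<le> card {y\<in>T. F x y}" using node_of_degree_n by blast
  then show False using D assms unfolding max_degree_le_def by fastforce
qed

subsection \<open>The star model: A_n is in [n,2,1]\<close>

text \<open>The star with centre 0 and leaves 1..n; s_i is the leaf i and v_ij the path i, 0, j.\<close>
definition star_edge :: "nat \<Rightarrow> nat \<Rightarrow> nat \<Rightarrow> bool" where
  "star_edge n a b \<longleftrightarrow> (a = 0 \<and> 1 \<le> b \<and> b \<le> n) \<or> (b = 0 \<and> 1 \<le> a \<and> a \<le> n)"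

fun star_path :: "avert \<Rightarrow> nat set" where
  "star_path (Sv i) = {i}"
| "star_path (Cv i j) = {i, 0, j}"

lemma star_is_tree: "is_tree {0..n} (star_edge n)"
  unfolding is_tree_def
proof (intro conjI)
  show "\<forall>x y. star_edge n x y \<longrightarrow> x \<in> {0..n} \<and> y \<in> {0..n} \<and> x \<noteq> y \<and> star_edge n y x"
    unfolding star_edge_def by auto
next
  show "\<forall>u\<in>{0..n}. \<forall>v\<in>{0..n}. \<exists>xs. graph_path {0..n} (star_edge n) xs \<and> hd xs = u \<and> last xs = v"
  proof (intro ballI)
    fix u v assume uv: "u \<in> {0..n}" "v \<in> {0..n}"
    consider "u = v" | "u \<noteq> v" "u = 0 \<or> v = 0" | "u \<noteq> v" "u \<noteq> 0" "v \<noteq> 0" by blast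
    then show "\<exists>xs. graph_path {0..n} (star_edge n) xs \<and> hd xs = u \<and> last xs = v"
    proof cases
      case 1 then show ?thesis using uv by (intro exI[of _ "[u]"]) (auto simp: graph_path_def)
    next
      case 2 then show ?thesis using uv
        by (intro exI[of _ "[u, v]"]) (auto simp: graph_path_def star_edge_def)
    next
      case 3 then show ?thesis using uv
        by (intro exI[of _ "[u, 0, v]"]) (auto simp: graph_path_def star_edge_def)
    qed
  qed
next
  text \<open>In a path of length at least 3 the centre is an inner vertex, so no edge closes it.\<close>
  show "\<not> (\<exists>xs. graph_path {0..n} (star_edge n) xs \<and> 3 \<le> length xs \<and> star_edge n (last xs) (hd xs))"
  proof
    assume "\<exists>xs. graph_path {0..n} (star_edge n) xs \<and> 3 \<le> length xs \<and> star_edge n (last xs) (hd xs)"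
    then obtain xs where g: "graph_path {0..n} (star_edge n) xs" "3 \<le> length xs"
      "star_edge n (last xs) (hd xs)" by blast
    then obtain a b c r where xs: "xs = a # b # c # r"
      by (metis One_nat_def Suc_le_length_iff numeral_3_eq_3)
    have e: "star_edge n a b" "star_edge n b c" "distinct (a # b # c # r)"
      using g(1) xs by (auto simp: graph_path_def)
    show False
    proof (cases "b = 0")
      case True
      then have "last xs = 0" using e g(3) xs by (auto simp: star_edge_def)
      moreover have "last xs \<in> set (c # r)" using xs by simp
      ultimately show False using e True by auto
    next
      case False
      then show False using e unfolding star_edge_def by auto
    qed
  qed
qed simp_all

lemma star_max_degree: "1 \<le> n \<Longrightarrow> max_degree_le {0..n} (star_edge n) n"
  unfolding max_degree_le_def
proof
  fix x assume "1 \<le> n" "x \<in> {0..n}"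
  then have "{y \<in> {0..n}. star_edge n x y} = (if x = 0 then {1..n} else {0})"
    by (auto simp: star_edge_def)
  then show "card {y \<in> {0..n}. star_edge n x y} \<le> n" using \<open>1 \<le> n\<close> by simp
qed

lemma star_model: "vpt_model (An_V n) An_E {0..n} (star_edge n) star_path"
  unfolding vpt_model_def
proof (intro conjI ballI impI)
  show "is_tree {0..n} (star_edge n)" by (rule star_is_tree)
next
  fix v assume v: "v \<in> An_V n"
  show "is_tree_path {0..n} (star_edge n) (star_path v)"
  proof (cases v)
    case (Sv i)
    then show ?thesis using v unfolding is_tree_path_def An_V_def An_S_def An_K_def
      by (intro exI[of _ "[i]"]) (auto simp: graph_path_def)
  next
    case (Cv i j)
    then show ?thesis using v unfolding is_tree_path_def An_V_def An_S_def An_K_def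
      by (intro exI[of _ "[i, 0, j]"]) (auto simp: graph_path_def star_edge_def)
  qed
next
  fix u v assume "u \<in> An_V n" "v \<in> An_V n" "u \<noteq> v"
  then show "An_E u v \<longleftrightarrow> star_path u \<inter> star_path v \<noteq> {}"
    unfolding An_V_def An_S_def An_K_def by (cases u; cases v) auto
qed

lemma An_in_h21: "1 \<le> n \<Longrightarrow> in_h21 n (An_V n) An_E"
  unfolding in_h21_def using star_model star_max_degree by blast

subsection \<open>A_n is in SVS\<close>

lemma An_split: "split_partition (An_V n) An_E (An_S n) (An_K n)"
  unfolding split_partition_def An_V_def An_S_def An_K_def by auto

lemma An_clique_stable_degree: "v \<in> An_K n \<Longrightarrow> card {x\<in>An_S n. An_E v x} \<le> 2"
proof -
  assume "v \<in> An_K n"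
  then obtain i j where v: "v = Cv i j" unfolding An_K_def by auto
  have "{x\<in>An_S n. An_E v x} \<subseteq> {Sv i, Sv j}" unfolding v An_S_def by auto
  then have "card {x\<in>An_S n. An_E v x} \<le> card {Sv i, Sv j}" by (rule card_mono[rotated]) simp
  also have "\<dots> \<le> 2" by (simp add: card_insert_if)
  finally show ?thesis .
qed

text \<open>Two stable vertices of a sun at non-consecutive positions that are vertices s_p, s_q
  of A_n have the common neighbour v_pq.\<close>
lemma sun_stable_pair:
  assumes sun: "induced_sun (An_V n) An_E k s c" and ab: "a < k" "b < k" "a \<noteq> b"
    "b \<noteq> Suc a mod k" "a \<noteq> Suc b mod k" and sp: "s a = Sv p" "s b = Sv q"
  shows "\<exists>v\<in>An_K n. \<exists>i<k. \<exists>j<k. i \<noteq> j \<and> j \<noteq> Suc i mod k \<and> i \<noteq> Suc j mod k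
                   \<and> An_E v (s i) \<and> An_E v (s j)"
proof -
  have V: "s a \<in> An_V n" "s b \<in> An_V n" "inj_on s {..<k}"
    using sun ab unfolding induced_sun_def by auto
  then have "p \<noteq> q" using sp ab inj_onD[OF V(3), of a b] by auto
  then have "pair_vertex p q \<in> An_K n" using V sp Sv_in_V pair_vertex_in_K by metis
  moreover have "An_E (pair_vertex p q) (s a)" "An_E (pair_vertex p q) (s b)" using sp by simp_all
  ultimately show ?thesis using ab by blast
qed

text \<open>The stable side of a sun in A_n contains at most one clique vertex of A_n, since any
  two of them are adjacent.\<close>
lemma sun_one_clique_vertex:
  assumes sun: "induced_sun (An_V n) An_E k s c" and ab: "a < k" "b < k" "a \<noteq> b"
  shows "(\<exists>p. s a = Sv p) \<or> (\<exists>q. s b = Sv q)"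
proof (rule ccontr)
  assume "\<not> ?thesis"
  then obtain i j i' j' where "s a = Cv i j" "s b = Cv i' j'" by (metis avert.exhaust)
  moreover have "s a \<noteq> s b" using sun ab unfolding induced_sun_def by (meson inj_onD lessThan_iff)
  moreover have "\<not> An_E (s a) (s b)" using sun ab unfolding induced_sun_def by blast
  ultimately show False by auto
qed

text \<open>The SVS sun condition, even for every sun with k \<ge> 4: by the previous lemma s_0, s_2
  or s_1, s_3 are two non-consecutive stable vertices of A_n.\<close>
lemma An_sun_condition:
  assumes k: "4 \<le> k" and sun: "induced_sun (An_V n) An_E k s c"
  shows "\<exists>v\<in>An_K n. \<exists>i<k. \<exists>j<k. i \<noteq> j \<and> j \<noteq> Suc i mod k \<and> i \<noteq> Suc j mod k
                   \<and> An_E v (s i) \<and> An_E v (s j)"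
proof -
  have "Suc 3 mod k \<noteq> 1" using k by (cases "k = 4") auto
  then have mods: "Suc 0 mod k = 1" "Suc 2 mod k = 3" "Suc 3 mod k \<noteq> 1" using k by auto
  consider "\<exists>p q. s 0 = Sv p \<and> s 2 = Sv q" | "\<exists>p q. s 1 = Sv p \<and> s 3 = Sv q"
    using sun_one_clique_vertex[OF sun, of 0 2] sun_one_clique_vertex[OF sun, of 1 0]
      sun_one_clique_vertex[OF sun, of 1 2] sun_one_clique_vertex[OF sun, of 3 0]
      sun_one_clique_vertex[OF sun, of 3 2] k by force
  then show ?thesis
  proof cases
    case 1 then show ?thesis using sun_stable_pair[OF sun, of 0 2] k mods by fastforce
  next
    case 2 then show ?thesis using sun_stable_pair[OF sun, of 1 3] k mods by fastforce
  qed
qed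

lemma An_SVS: "SVS (An_V n) An_E (An_S n) (An_K n)"
  unfolding SVS_def
proof (intro conjI ballI allI impI)
  show "split_partition (An_V n) An_E (An_S n) (An_K n)" by (rule An_split)
  show "VPT (An_V n) An_E" unfolding VPT_def using star_model by blast
  show "card {x\<in>An_S n. An_E v x} \<le> 2" if "v \<in> An_K n" for v
    using An_clique_stable_degree that .
next
  fix k s c assume "(k = 4 \<or> odd k \<and> 5 \<le> k) \<and> induced_sun (An_V n) An_E k s c"
  then show "\<exists>v\<in>An_K n. \<exists>i<k. \<exists>j<k. i \<noteq> j \<and> j \<noteq> Suc i mod k \<and> i \<noteq> Suc j mod k
                   \<and> An_E v (s i) \<and> An_E v (s j)"
    using An_sun_condition[of k] by auto
qed

subsection \<open>The branch graph B(A_n/K) is complete\<close>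

lemma An_branch_vertices:
  assumes "2 \<le> n" shows "branch_vertices (An_V n) An_E (An_K n) = An_S n"
proof
  show "branch_vertices (An_V n) An_E (An_K n) \<subseteq> An_S n"
    unfolding branch_vertices_def An_V_def by auto
next
  show "An_S n \<subseteq> branch_vertices (An_V n) An_E (An_K n)"
  proof
    fix x assume x: "x \<in> An_S n"
    then obtain i where i: "x = Sv i" "1 \<le> i" "i \<le> n" unfolding An_S_def by auto
    have "\<exists>j. 1 \<le> j \<and> j \<le> n \<and> j \<noteq> i" using assms by presburger
    then obtain j where j: "1 \<le> j" "j \<le> n" "j \<noteq> i" by blast
    have "pair_vertex i j \<in> An_K n" using pair_vertex_in_K i j by auto
    moreover have "x \<in> An_V n - An_K n" using x unfolding An_V_def An_S_def An_K_def by auto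
    ultimately show "x \<in> branch_vertices (An_V n) An_E (An_K n)"
      unfolding branch_vertices_def using i by force
  qed
qed

text \<open>For distinct s_a, s_b the witnesses are v_ab (common neighbour), v_at and v_bt.\<close>
lemma An_branch_adj:
  assumes n: "3 \<le> n" and v: "v \<in> An_S n" and w: "w \<in> An_S n"
  shows "branch_adj An_E (An_K n) v w \<longleftrightarrow> v \<noteq> w"
proof
  assume "branch_adj An_E (An_K n) v w"
  then show "v \<noteq> w" unfolding branch_adj_def by auto
next
  assume ne: "v \<noteq> w"
  obtain a b where ab: "v = Sv a" "1 \<le> a" "a \<le> n" "w = Sv b" "1 \<le> b" "b \<le> n"
    using v w unfolding An_S_def by auto
  obtain t where t: "1 \<le> t" "t \<le> n" "t \<noteq> a" "t \<noteq> b" using exists_other_index[OF n] by blast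
  have K: "pair_vertex a b \<in> An_K n" "pair_vertex a t \<in> An_K n" "pair_vertex b t \<in> An_K n"
    using pair_vertex_in_K ab t ne by auto
  have "\<not> An_E v w" using ab by simp
  moreover have "An_E (pair_vertex a b) v \<and> An_E (pair_vertex a b) w" using ab by simp
  moreover have "An_E (pair_vertex a t) v \<and> \<not> An_E (pair_vertex a t) w" using ab t ne by auto
  moreover have "An_E (pair_vertex b t) w \<and> \<not> An_E (pair_vertex b t) v" using ab t ne by auto
  ultimately show "branch_adj An_E (An_K n) v w" unfolding branch_adj_def using K by blast
qed

theorem mainTheorem11:
  fixes n :: nat
  assumes "n \<ge> 4"
  shows "SVS (An_V n) An_E (An_S n) (An_K n)
    \<and> branch_vertices (An_V n) An_E (An_K n) = An_S n
    \<and> (\<forall>v\<in>An_S n. \<forall>w\<in>An_S n. branch_adj An_E (An_K n) v w \<longleftrightarrow> v \<noteq> w)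
    \<and> in_h21 n (An_V n) An_E \<and> \<not> in_h21 (n - 1) (An_V n) An_E"
  using assms An_SVS An_branch_vertices An_branch_adj An_in_h21 An_not_in_h21 by simp

end
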